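(* Let $A, B, C, F \in \mathbb{R}^{n\times n}$ and consider the matrix equation $$AX + B\lvert CX\rvert = F$$ in the unknown $X \in \mathbb{R}^{n\times n}$. This equation has exactly one solution if any one of the following conditions is satisfied: (i) $C$ is invertible and $\sigma_{\max}(\lvert B\rvert) < \sigma_{\min}(AC^{-1})$; (ii) $C$ is invertible and $\sigma_{\max}(B) < \sigma_{\min}(AC^{-1})$; (iii) $A$ is invertible and $\rho\left(\lvert CA^{-1}\rvert\cdot\lvert B\rvert\right) < 1$; (iv) $A$ is invertible and $\sigma_{\max}(CA^{-1}B) < 1$.
   Context: $\lvert M\rvert$ is the entrywise absolute value of a matrix $M$; $\sigma_{\max}(\cdot)$ and $\sigma_{\min}(\cdot)$ denote the largest and smallest singular values of a real square matrix; $\rho(\cdot)$ is the spectral radius. *)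

theory Defs
  imports "HOL-Analysis.Analysis"
begin

definition mat_abs :: "real^'n^'m \<Rightarrow> real^'n^'m" where
  "mat_abs M = (\<chi> i j. \<bar>M $ i $ j\<bar>)"

definition real_eigenvalues :: "real^'n^'n \<Rightarrow> real set" where
  "real_eigenvalues M = {c. \<exists>v. v \<noteq> 0 \<and> M *v v = c *\<^sub>R v}"

definition sigma_max :: "real^'n^'n \<Rightarrow> real" where
  "sigma_max M = sqrt (Max (real_eigenvalues (transpose M ** M)))"

definition sigma_min :: "real^'n^'n \<Rightarrow> real" where
  "sigma_min M = sqrt (Min (real_eigenvalues (transpose M ** M)))"

definition complexify :: "real^'n^'n \<Rightarrow> complex^'n^'n" where
  "complexify M = (\<chi> i j. complex_of_real (M $ i $ j))"

definition complex_eigenvalues :: "real^'n^'n \<Rightarrow> complex set" where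
  "complex_eigenvalues M = {c. \<exists>v::complex^'n. v \<noteq> 0 \<and> complexify M *v v = c *s v}"

definition spectral_radius :: "real^'n^'n \<Rightarrow> real" where
  "spectral_radius M = Max (cmod ` complex_eigenvalues M)"

end

theory Submission
  imports Defs "HOL-Computational_Algebra.Polynomial"
begin

text \<open>
  Column by column, the matrix equation is the vector equation A x + B |C x| = f. If A is
  invertible, x solves it iff x = h (C x) with h z = A^-1 (f - B |z|), so by the rolling rule
  for fixed points it is uniquely solvable iff z = C A^-1 f - M |z| is, where M = C A^-1 B.
  In cases (i) and (ii), A = (A C^-1) C is invertible because sigma_min (A C^-1) > 0, and
  C A^-1 = (A C^-1)^-1.

  Since |.| is 1-Lipschitz, z \<mapsto> g - M |z| is a contraction as soon as |M w| \<le> q |w| with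
  q < 1; the Rayleigh quotient of K^T K gives sigma_min K |v| \<le> |K v| \<le> sigma_max K |v|,
  which settles (i), (ii) and (iv). In case (iii), |M w| \<le> P |w| entrywise for the
  nonnegative matrix P = |C A^-1| |B| of spectral radius < 1, so by a weak Perron-Frobenius
  argument some u > 0 has P u < u. Comparing |z1 - z2| with multiples of u gives uniqueness,
  and Brouwer's theorem on the box |z| \<le> R u gives existence.
\<close>

lemma finite_type_obtain_arg_max:
  fixes f :: "'a::finite \<Rightarrow> 'b::linorder"
  obtains k where "\<And>j. f j \<le> f k"
proof -
  have "Max (range f) \<in> range f" by (intro Max_in) auto
  then obtain k where k: "Max (range f) = f k" by blast
  have "f j \<le> f k" for j using Max_ge[of "range f" "f j"] k by simp
  then show ?thesis using that by blast
qed

definition vec_abs :: "real^'n \<Rightarrow> real^'n" where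
  "vec_abs v = (\<chi> i. \<bar>v $ i\<bar>)"

lemma vec_abs_component [simp]: "vec_abs v $ i = \<bar>v $ i\<bar>"
  by (simp add: vec_abs_def)

lemma norm_vec_abs [simp]: "norm (vec_abs v) = norm v"
  by (intro antisym norm_le_componentwise_cart) simp_all

lemma norm_vec_abs_diff_le: "norm (vec_abs v - vec_abs w) \<le> norm (v - w)"
  by (rule norm_le_componentwise_cart) (simp add: abs_triangle_ineq3)

lemma continuous_on_vec_abs: "continuous_on S vec_abs"
  unfolding vec_abs_def by (intro continuous_on_vec_lambda continuous_intros)

lemma matrix_vector_mult_component: "(M *v v) $ i = (\<Sum>j\<in>UNIV. M $ i $ j * v $ j)"
  by (simp add: matrix_vector_mult_def)

lemma matrix_vector_mult_mono:
  fixes P :: "real^'n^'m"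
  assumes "\<And>i j. 0 \<le> P $ i $ j" "\<And>j. v $ j \<le> w $ j"
  shows "(P *v v) $ i \<le> (P *v w) $ i"
  unfolding matrix_vector_mult_component by (rule sum_mono, rule mult_left_mono) (use assms in auto)

lemma mat_abs_nonneg: "0 \<le> mat_abs M $ i $ j"
  by (simp add: mat_abs_def)

lemma abs_matrix_vector_mult_le: "\<bar>(M *v v) $ i\<bar> \<le> (mat_abs M *v vec_abs v) $ i"
  unfolding matrix_vector_mult_component mat_abs_def
  by (rule order_trans[OF sum_abs]) (simp add: abs_mult)

lemma norm_matrix_vector_le_mat_abs: "norm (B *v w) \<le> norm (mat_abs B *v vec_abs w)"
  by (rule norm_le_componentwise_cart)
    (simp only: real_norm_def, rule order_trans[OF abs_matrix_vector_mult_le abs_ge_self])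

lemma mat_abs_mult_mat_abs_nonneg: "0 \<le> (mat_abs M ** mat_abs N) $ i $ j"
  by (simp add: matrix_matrix_mult_def mat_abs_def sum_nonneg)

lemma abs_matrix_mult_vector_le: "\<bar>((M ** N) *v w) $ i\<bar> \<le> ((mat_abs M ** mat_abs N) *v vec_abs w) $ i"
proof -
  have "\<bar>((M ** N) *v w) $ i\<bar> \<le> (mat_abs M *v vec_abs (N *v w)) $ i"
    unfolding matrix_vector_mul_assoc[symmetric] by (rule abs_matrix_vector_mult_le)
  also have "\<dots> \<le> (mat_abs M *v (mat_abs N *v vec_abs w)) $ i"
    by (rule matrix_vector_mult_mono) (simp_all add: mat_abs_nonneg abs_matrix_vector_mult_le)
  finally show ?thesis by (simp add: matrix_vector_mul_assoc)
qed

lemma matrix_mul_matrix_inv: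
  assumes "invertible A"
  shows "A ** matrix_inv A = mat 1" "matrix_inv A ** A = mat 1"
  using someI_ex[OF assms[unfolded invertible_def]] by (simp_all add: matrix_inv_def)

lemma matrix_inv_matrix_vector_mult:
  assumes "invertible A"
  shows "A *v (matrix_inv A *v v) = v" "matrix_inv A *v (A *v v) = v"
  by (simp_all add: matrix_vector_mul_assoc matrix_mul_matrix_inv[OF assms])

lemma invertible_iff_trivial_kernel:
  fixes A :: "'a::field^'n^'n"
  shows "invertible A \<longleftrightarrow> (\<forall>v. A *v v = 0 \<longrightarrow> v = 0)"
proof -
  have "inj ((*v) A) \<longleftrightarrow> (\<forall>v. A *v v = 0 \<longrightarrow> v = 0)"
    by (rule vec.linear_inj_iff_eq_0) (rule matrix_vector_mul_linear_gen)
  then show ?thesis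
    using vec.linear_inj_imp_surj[OF matrix_vector_mul_linear_gen]
    by (auto simp: invertible_eq_bij bij_def)
qed

lemma matrix_inv_unique:
  fixes A B :: "'a::field^'n^'n"
  assumes "A ** B = mat 1"
  shows "matrix_inv A = B"
proof -
  have "invertible A" using assms invertible_right_inverse by blast
  have "matrix_inv A = matrix_inv A ** (A ** B)" by (simp add: assms)
  also have "\<dots> = (matrix_inv A ** A) ** B" by (simp add: matrix_mul_assoc)
  also have "\<dots> = B" by (simp add: matrix_mul_matrix_inv[OF \<open>invertible A\<close>])
  finally show ?thesis .
qed

lemma invertible_matrix_vector_eq_iff:
  fixes A :: "'a::field^'n^'n"
  assumes "invertible A"
  shows "A *v x = y \<longleftrightarrow> x = matrix_inv A *v y"
  using matrix_inv_matrix_vector_mult[OF assms] by metis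

section \<open>Eigenvalues\<close>

lemma matrix_vector_mult_mat: "(mat c :: 'a::comm_semiring_1^'n^'n) *v v = c *s v"
  by (simp add: vec_eq_iff matrix_vector_mult_component mat_def if_distrib[of "\<lambda>x. x * _"] cong: if_cong)

lemma det_sub_mat_poly: "\<exists>p. \<forall>c. poly p c = det (N - mat c :: 'a::field^'n^'n)"
proof -
  define p where "p = (\<Sum>q | q permutes (UNIV::'n set). smult (of_int (sign q))
      (\<Prod>i\<in>UNIV. [:N $ i $ q i, - (if i = q i then 1 else 0):]))"
  have "poly p c = det (N - mat c)" for c
    unfolding p_def det_def poly_sum poly_smult poly_prod
    by (intro sum.cong refl arg_cong2[where f="(*)"] prod.cong) (auto simp: mat_def)
  then show ?thesis by blast
qed

lemma eigenvector_iff_det_eq_0: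
  fixes N :: "'a::field^'n^'n"
  shows "(\<exists>v. v \<noteq> 0 \<and> N *v v = c *s v) \<longleftrightarrow> det (N - mat c) = 0"
proof -
  have "N *v v = c *s v \<longleftrightarrow> (N - mat c) *v v = 0" for v
    by (simp add: matrix_vector_mult_diff_rdistrib matrix_vector_mult_mat)
  then have "(\<exists>v. v \<noteq> 0 \<and> N *v v = c *s v) \<longleftrightarrow> \<not> invertible (N - mat c)"
    unfolding invertible_iff_trivial_kernel by blast
  then show ?thesis by (simp add: invertible_det_nz)
qed

lemma norm_eigenvalue_le_sum_norm_entries:
  fixes N :: "'a::real_normed_field^'n^'n"
  assumes "v \<noteq> 0" "N *v v = c *s v"
  shows "norm c \<le> (\<Sum>i\<in>UNIV. \<Sum>j\<in>UNIV. norm (N $ i $ j))"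
proof -
  obtain k where k: "\<And>j. norm (v $ j) \<le> norm (v $ k)"
    using finite_type_obtain_arg_max[of "\<lambda>j. norm (v $ j)"] by blast
  have "0 < norm (v $ k)"
  proof (rule ccontr)
    assume "\<not> 0 < norm (v $ k)"
    then have "v $ j = 0" for j using k[of j] by simp
    then show False using assms(1) by (simp add: vec_eq_iff)
  qed
  have "norm c * norm (v $ k) = norm ((N *v v) $ k)" using assms(2) by (simp add: norm_mult)
  also have "\<dots> \<le> (\<Sum>j\<in>UNIV. norm (N $ k $ j) * norm (v $ j))"
    unfolding matrix_vector_mult_component by (rule order_trans[OF norm_sum]) (simp add: norm_mult)
  also have "\<dots> \<le> (\<Sum>j\<in>UNIV. norm (N $ k $ j)) * norm (v $ k)"
    unfolding sum_distrib_right by (rule sum_mono, rule mult_left_mono[OF k]) simp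
  also have "\<dots> \<le> (\<Sum>i\<in>UNIV. \<Sum>j\<in>UNIV. norm (N $ i $ j)) * norm (v $ k)"
    by (rule mult_right_mono, rule member_le_sum) (auto intro: sum_nonneg)
  finally show ?thesis using \<open>0 < norm (v $ k)\<close> by simp
qed

lemma finite_eigenvalues:
  fixes N :: "'a::real_normed_field^'n^'n"
  shows "finite {c. \<exists>v. v \<noteq> 0 \<and> N *v v = c *s v}"
proof -
  obtain p where p: "\<And>c. poly p c = det (N - mat c)" using det_sub_mat_poly by blast
  define K where "K = (\<Sum>i\<in>UNIV. \<Sum>j\<in>UNIV. norm (N $ i $ j))"
  have "0 \<le> K" unfolding K_def by (intro sum_nonneg) auto
  \<comment> \<open>K + 1 exceeds every eigenvalue in norm, so the characteristic polynomial is not zero\<close>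
  have "\<not> (\<exists>v. v \<noteq> 0 \<and> N *v v = of_real (K + 1) *s v)"
  proof
    assume "\<exists>v. v \<noteq> 0 \<and> N *v v = of_real (K + 1) *s v"
    then have "norm (of_real (K + 1) :: 'a) \<le> K"
      unfolding K_def using norm_eigenvalue_le_sum_norm_entries by blast
    with \<open>0 \<le> K\<close> show False by simp
  qed
  then have "p \<noteq> 0" using p eigenvector_iff_det_eq_0 by (metis poly_0)
  then have "finite {c. poly p c = 0}" by (rule poly_roots_finite)
  then show ?thesis by (simp add: p eigenvector_iff_det_eq_0)
qed

lemma finite_real_eigenvalues: "finite (real_eigenvalues M)"
  using finite_eigenvalues[of M] by (simp add: real_eigenvalues_def scalar_mult_eq_scaleR)

lemma finite_complex_eigenvalues: "finite (complex_eigenvalues M)"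
  unfolding complex_eigenvalues_def by (rule finite_eigenvalues)

lemma of_real_mem_complex_eigenvalues:
  assumes "v \<noteq> 0" "M *v v = c *\<^sub>R v"
  shows "complex_of_real c \<in> complex_eigenvalues M"
proof -
  define w where "w = (\<chi> i. complex_of_real (v $ i))"
  have "w \<noteq> 0" using assms(1) by (simp add: w_def vec_eq_iff)
  moreover have "complexify M *v w = complex_of_real c *s w"
    using assms(2)
    by (simp add: vec_eq_iff w_def complexify_def matrix_vector_mult_component flip: of_real_mult of_real_sum)
  ultimately show ?thesis unfolding complex_eigenvalues_def by blast
qed

lemma abs_real_eigenvalue_le_spectral_radius:
  assumes "v \<noteq> 0" "M *v v = t *\<^sub>R v"
  shows "\<bar>t\<bar> \<le> spectral_radius M"
proof -
  have "cmod (complex_of_real t) \<le> spectral_radius M"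
    unfolding spectral_radius_def using of_real_mem_complex_eigenvalues[OF assms]
    by (intro Max_ge finite_imageI finite_complex_eigenvalues imageI)
  then show ?thesis by simp
qed

section \<open>Singular values\<close>

lemma inner_matrix_vector_mult_transpose: "x \<bullet> (T *v y) = (transpose T *v x) \<bullet> (y :: real^'n)"
  by (simp add: dot_lmul_matrix)

lemma linear_coeff_zero_if_quadratic_nonneg:
  fixes a c :: real
  assumes "\<And>t. 0 \<le> 2 * t * a + t\<^sup>2 * c"
  shows "a = 0"
proof (rule ccontr)
  assume "a \<noteq> 0"
  then have a2: "0 < a\<^sup>2" by simp
  show False
  proof (cases "c \<le> 0")
    case True
    have "0 \<le> 2 * (- a) * a + (- a)\<^sup>2 * c" by (rule assms)
    also have "\<dots> = a\<^sup>2 * (c - 2)" by (simp add: power2_eq_square algebra_simps)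
    also have "\<dots> < 0" using a2 True by (simp add: mult_pos_neg)
    finally show False by simp
  next
    case False
    have "0 \<le> 2 * (- a / c) * a + (- a / c)\<^sup>2 * c" by (rule assms)
    also have "\<dots> = - (a\<^sup>2 / c)" using False by (simp add: power2_eq_square field_simps)
    also have "\<dots> < 0" using a2 False by simp
    finally show False by simp
  qed
qed

lemma psd_quadratic_form_eq_0_imp_kernel:
  fixes T :: "real^'n^'n"
  assumes sym: "transpose T = T" and psd: "\<And>v. 0 \<le> v \<bullet> (T *v v)"
    and "v \<bullet> (T *v v) = 0"
  shows "T *v v = 0"
proof -
  define r where "r = T *v v"
  have "(v + t *\<^sub>R r) \<bullet> (T *v (v + t *\<^sub>R r)) = 2 * t * (r \<bullet> r) + t\<^sup>2 * (r \<bullet> (T *v r))" for t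
    using assms(3) inner_matrix_vector_mult_transpose[of v T r]
    by (simp add: sym r_def inner_commute power2_eq_square algebra_simps)
  then have "r \<bullet> r = 0" using psd by (metis linear_coeff_zero_if_quadratic_nonneg)
  then show ?thesis by (simp add: r_def)
qed

lemma inner_gram_matrix: "v \<bullet> ((transpose K ** K) *v w) = (K *v v) \<bullet> (K *v (w :: real^'n))"
  unfolding matrix_vector_mul_assoc[symmetric] inner_matrix_vector_mult_transpose transpose_transpose ..

text \<open>Take \<sigma> = 1 at a minimiser and \<sigma> = -1 at a maximiser of the Rayleigh quotient.\<close>

lemma gram_eigenvector_if_extremal:
  fixes K :: "real^'n^'n"
  assumes "\<And>v. 0 \<le> \<sigma> * (norm (K *v v) ^ 2 - m * norm v ^ 2)" "\<sigma> \<noteq> 0"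
    and "norm (K *v w) ^ 2 = m * norm w ^ 2"
  shows "(transpose K ** K) *v w = m *\<^sub>R w"
proof -
  define T where "T = \<sigma> *\<^sub>R (transpose K ** K - mat m)"
  have quad: "v \<bullet> (T *v v) = \<sigma> * (norm (K *v v) ^ 2 - m * norm v ^ 2)" for v
    by (simp add: T_def flip: scaleR_matrix_vector_assoc)
      (simp add: matrix_vector_mult_diff_rdistrib matrix_vector_mult_mat inner_diff_right
        inner_gram_matrix power2_norm_eq_inner scalar_mult_eq_scaleR)
  have "transpose T = T"
    by (simp add: T_def transpose_def matrix_matrix_mult_def mat_def vec_eq_iff mult.commute)
  then have "T *v w = 0"
    by (rule psd_quadratic_form_eq_0_imp_kernel) (use assms quad in auto)
  then show ?thesis using assms(2)
    by (simp add: T_def matrix_vector_mult_diff_rdistrib matrix_vector_mult_mat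
        scalar_mult_eq_scaleR flip: scaleR_matrix_vector_assoc)
qed

lemma gram_eigenvalues_extremal:
  fixes K :: "real^'n^'n"
  obtains m M where "m \<in> real_eigenvalues (transpose K ** K)" "M \<in> real_eigenvalues (transpose K ** K)"
    "\<And>v. m * norm v ^ 2 \<le> norm (K *v v) ^ 2" "\<And>v. norm (K *v v) ^ 2 \<le> M * norm v ^ 2"
proof -
  define q where "q v = norm (K *v v) ^ 2" for v
  have sphere: "compact (sphere (0::real^'n) 1)" "sphere (0::real^'n) 1 \<noteq> {}" by simp_all
  have cont: "continuous_on (sphere 0 1) q"
    unfolding q_def by (intro continuous_intros linear_continuous_on matrix_vector_mul_bounded_linear)
  obtain u where u: "norm u = 1" "\<And>v. norm v = 1 \<Longrightarrow> q u \<le> q v"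
    using continuous_attains_inf[OF sphere cont] by auto
  obtain U where U: "norm U = 1" "\<And>v. norm v = 1 \<Longrightarrow> q v \<le> q U"
    using continuous_attains_sup[OF sphere cont] by auto
  have homogeneous: "q v = norm v ^ 2 * q (inverse (norm v) *\<^sub>R v)" for v
    unfolding q_def
    by (cases "v = 0") (simp_all add: matrix_vector_mult_scaleR power_mult_distrib power_inverse)
  have unit: "norm (inverse (norm v) *\<^sub>R v) = 1" if "v \<noteq> 0" for v :: "real^'n"
    using that by simp
  have lower: "q u * norm v ^ 2 \<le> q v" for v
  proof (cases "v = 0")
    case False
    then show ?thesis
      using u(2)[OF unit[OF False]] by (subst homogeneous) (simp add: mult.commute mult_left_mono)
  qed (simp add: q_def)
  have upper: "q v \<le> q U * norm v ^ 2" for v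
  proof (cases "v = 0")
    case False
    then show ?thesis
      using U(2)[OF unit[OF False]] by (subst homogeneous) (simp add: mult.commute mult_left_mono)
  qed (simp add: q_def)
  have "(transpose K ** K) *v u = q u *\<^sub>R u"
    by (rule gram_eigenvector_if_extremal[where \<sigma>=1]) (use lower u in \<open>auto simp: q_def\<close>)
  moreover have "(transpose K ** K) *v U = q U *\<^sub>R U"
    by (rule gram_eigenvector_if_extremal[where \<sigma>="-1"]) (use upper U in \<open>auto simp: q_def\<close>)
  moreover have "u \<noteq> 0" "U \<noteq> 0" using u(1) U(1) by auto
  ultimately have "q u \<in> real_eigenvalues (transpose K ** K)" "q U \<in> real_eigenvalues (transpose K ** K)"
    unfolding real_eigenvalues_def by blast+
  then show ?thesis
    by (rule that) (use lower upper in \<open>simp_all add: q_def\<close>)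
qed

lemma gram_eigenvalue_eq_norm_ratio:
  assumes "l \<in> real_eigenvalues (transpose K ** K)"
  obtains w where "w \<noteq> 0" "norm (K *v w) ^ 2 = l * norm w ^ 2"
proof -
  obtain w where w: "w \<noteq> 0" "(transpose K ** K) *v w = l *\<^sub>R w"
    using assms unfolding real_eigenvalues_def by blast
  have "norm (K *v w) ^ 2 = w \<bullet> ((transpose K ** K) *v w)"
    by (simp add: inner_gram_matrix power2_norm_eq_inner)
  also have "\<dots> = l * norm w ^ 2" by (simp add: w(2) power2_norm_eq_inner)
  finally show ?thesis using that w(1) by blast
qed

lemma sigma_min_max_bounds:
  fixes K :: "real^'n^'n"
  shows sigma_max_nonneg: "0 \<le> sigma_max K"
    and sigma_min_le_norm: "sigma_min K * norm v \<le> norm (K *v v)"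
    and norm_le_sigma_max: "norm (K *v v) \<le> sigma_max K * norm v"
proof -
  obtain m M where eig: "m \<in> real_eigenvalues (transpose K ** K)" "M \<in> real_eigenvalues (transpose K ** K)"
    and bounds: "\<And>v. m * norm v ^ 2 \<le> norm (K *v v) ^ 2" "\<And>v. norm (K *v v) ^ 2 \<le> M * norm v ^ 2"
    using gram_eigenvalues_extremal[of K] by blast
  have between: "m \<le> l \<and> l \<le> M" if l: "l \<in> real_eigenvalues (transpose K ** K)" for l
  proof -
    obtain w where w: "w \<noteq> 0" "norm (K *v w) ^ 2 = l * norm w ^ 2"
      using gram_eigenvalue_eq_norm_ratio[OF l] by blast
    then show ?thesis using bounds[of w] by simp
  qed
  have "0 \<le> M"
  proof -
    obtain w where w: "w \<noteq> 0" "norm (K *v w) ^ 2 = M * norm w ^ 2"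
      using gram_eigenvalue_eq_norm_ratio[OF eig(2)] by blast
    then have "0 \<le> M * norm w ^ 2" by (metis zero_le_power2)
    with w(1) show ?thesis by (simp add: zero_le_mult_iff)
  qed
  have sigma_min_eq: "sigma_min K = sqrt m"
    unfolding sigma_min_def using eig(1) between
    by (intro arg_cong[where f=sqrt] Min_eqI finite_real_eigenvalues) auto
  have sigma_max_eq: "sigma_max K = sqrt M"
    unfolding sigma_max_def using eig(2) between
    by (intro arg_cong[where f=sqrt] Max_eqI finite_real_eigenvalues) auto
  show "0 \<le> sigma_max K" using \<open>0 \<le> M\<close> by (simp add: sigma_max_eq)
  have "sqrt (m * norm v ^ 2) \<le> sqrt (norm (K *v v) ^ 2)"
    using bounds(1) by (simp only: real_sqrt_le_iff)
  then show "sigma_min K * norm v \<le> norm (K *v v)" by (simp add: sigma_min_eq real_sqrt_mult)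
  have "sqrt (norm (K *v v) ^ 2) \<le> sqrt (M * norm v ^ 2)"
    using bounds(2) by (simp only: real_sqrt_le_iff)
  then show "norm (K *v v) \<le> sigma_max K * norm v" by (simp add: sigma_max_eq real_sqrt_mult)
qed

lemma invertible_if_sigma_min_pos:
  fixes K :: "real^'n^'n"
  assumes "0 < sigma_min K"
  shows "invertible K"
  unfolding invertible_iff_trivial_kernel
  using sigma_min_le_norm[of K] assms by (metis mult_le_0_iff norm_eq_zero norm_le_zero_iff not_le)

section \<open>Fixed points of z = g - M |z|\<close>

lemma abs_fixpoint_unique_if_contraction:
  fixes M :: "real^'n^'n"
  assumes "0 \<le> q" "q < 1" "\<And>w. norm (M *v w) \<le> q * norm w"
  shows "\<exists>!z. z = g - M *v vec_abs z"
proof -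
  have "\<exists>!z. g - M *v vec_abs z = z"
  proof (rule banach_fix_type[OF assms(1,2)], intro allI)
    fix x y :: "real^'n"
    have "dist (g - M *v vec_abs x) (g - M *v vec_abs y) = norm (M *v (vec_abs y - vec_abs x))"
      by (simp add: dist_norm algebra_simps)
    also have "\<dots> \<le> q * norm (vec_abs y - vec_abs x)" by (rule assms(3))
    also have "\<dots> \<le> q * dist x y"
      using mult_left_mono[OF norm_vec_abs_diff_le assms(1)] by (simp add: dist_norm norm_minus_commute)
    finally show "dist (g - M *v vec_abs x) (g - M *v vec_abs y) \<le> q * dist x y" .
  qed
  then show ?thesis by metis
qed

lemma nonneg_vector_eq_0_if_subinvariant:
  fixes P :: "real^'n^'n"
  assumes P: "\<And>i j. 0 \<le> P $ i $ j" and u: "\<And>i. 0 < u $ i" "\<And>i. (P *v u) $ i < u $ i"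
    and d: "\<And>i. 0 \<le> d $ i" "\<And>i. d $ i \<le> (P *v d) $ i"
  shows "d = 0"
proof -
  obtain k where k: "\<And>j. d $ j / u $ j \<le> d $ k / u $ k"
    using finite_type_obtain_arg_max[of "\<lambda>j. d $ j / u $ j"] by blast
  \<comment> \<open>t u is the least multiple of u above d; d \<le> P d at the touching index k forces t \<le> 0\<close>
  define t where "t = d $ k / u $ k"
  have dt: "d $ j \<le> t * u $ j" for j
    using k[of j] u(1)[of j] by (simp add: t_def divide_le_eq)
  have "t * u $ k = d $ k" using u(1)[of k] by (simp add: t_def)
  also have "\<dots> \<le> (P *v d) $ k" by (rule d(2))
  also have "\<dots> \<le> (P *v (t *\<^sub>R u)) $ k" by (rule matrix_vector_mult_mono[OF P]) (simp add: dt)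
  also have "\<dots> = t * (P *v u) $ k" by (simp add: matrix_vector_mult_scaleR)
  finally have "t \<le> 0"
    using u(2)[of k] by (smt (verit) mult_less_cancel_left_pos)
  then have "d $ j \<le> 0" for j
    using dt[of j] u(1)[of j] by (meson less_imp_le mult_nonpos_nonneg order_trans)
  then show ?thesis using d(1) by (auto simp: vec_eq_iff intro: order_antisym)
qed

lemma abs_fixpoint_exists_if_dominated:
  fixes M P :: "real^'n^'n"
  assumes P: "\<And>i j. 0 \<le> P $ i $ j" and dom: "\<And>w i. \<bar>(M *v w) $ i\<bar> \<le> (P *v vec_abs w) $ i"
    and u: "\<And>i. 0 < u $ i" "\<And>i. (P *v u) $ i < u $ i"
  shows "\<exists>z. z = g - M *v vec_abs z"
proof -
  define f where "f z = g - M *v vec_abs z" for z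
  obtain k where k: "\<And>j. \<bar>g $ j\<bar> / (u $ j - (P *v u) $ j) \<le> \<bar>g $ k\<bar> / (u $ k - (P *v u) $ k)"
    using finite_type_obtain_arg_max[of "\<lambda>j. \<bar>g $ j\<bar> / (u $ j - (P *v u) $ j)"] by blast
  define R where "R = \<bar>g $ k\<bar> / (u $ k - (P *v u) $ k)"
  have "0 \<le> R" using u(2)[of k] by (simp add: R_def)
  have gR: "\<bar>g $ j\<bar> \<le> R * (u $ j - (P *v u) $ j)" for j
    using k[of j] u(2)[of j] by (simp add: R_def divide_le_eq)
  \<comment> \<open>the box |z| \<le> R u is mapped into itself since |g| \<le> R (u - P u)\<close>
  define S where "S = cbox (- (R *\<^sub>R u)) (R *\<^sub>R u)"
  have S: "z \<in> S \<longleftrightarrow> (\<forall>i. \<bar>z $ i\<bar> \<le> R * u $ i)" for z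
    unfolding S_def mem_box_cart by (simp add: abs_le_iff minus_le_iff conj_commute)
  have "f z \<in> S" if "z \<in> S" for z
    unfolding S
  proof
    fix i
    have "\<bar>f z $ i\<bar> \<le> \<bar>g $ i\<bar> + (P *v vec_abs (vec_abs z)) $ i"
      unfolding f_def using dom[of "vec_abs z" i] by simp
    also have "(P *v vec_abs (vec_abs z)) $ i \<le> (P *v (R *\<^sub>R u)) $ i"
      by (rule matrix_vector_mult_mono[OF P]) (use that S in auto)
    finally show "\<bar>f z $ i\<bar> \<le> R * u $ i"
      using gR[of i] by (simp add: algebra_simps)
  qed
  moreover have "0 \<in> S" using S \<open>0 \<le> R\<close> u(1) by (simp add: less_imp_le)
  moreover have "continuous_on S f"
    unfolding f_def by (intro continuous_intros continuous_on_compose2[OF _ continuous_on_vec_abs])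
      (auto intro: linear_continuous_on)
  ultimately obtain z where "f z = z"
    using brouwer[of S f] unfolding S_def by auto
  then show ?thesis unfolding f_def by metis
qed

lemma abs_fixpoint_unique_if_dominated:
  fixes M P :: "real^'n^'n"
  assumes P: "\<And>i j. 0 \<le> P $ i $ j" and dom: "\<And>w i. \<bar>(M *v w) $ i\<bar> \<le> (P *v vec_abs w) $ i"
    and u: "\<And>i. 0 < u $ i" "\<And>i. (P *v u) $ i < u $ i"
  shows "\<exists>!z. z = g - M *v vec_abs z"
proof (rule ex_ex1I)
  show "\<exists>z. z = g - M *v vec_abs z" by (rule abs_fixpoint_exists_if_dominated[OF P dom u])
next
  fix z1 z2 assume z: "z1 = g - M *v vec_abs z1" "z2 = g - M *v vec_abs z2"
  have "vec_abs (z1 - z2) = 0"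
  proof (rule nonneg_vector_eq_0_if_subinvariant[OF P u])
    fix i
    from z have "z1 - z2 = (g - M *v vec_abs z1) - (g - M *v vec_abs z2)"
      by (rule arg_cong2[where f="(-)"])
    also have "\<dots> = M *v (vec_abs z2 - vec_abs z1)" by (simp add: matrix_vector_mult_diff_distrib)
    finally have "\<bar>(z1 - z2) $ i\<bar> \<le> (P *v vec_abs (vec_abs z2 - vec_abs z1)) $ i"
      using dom by metis
    also have "\<dots> \<le> (P *v vec_abs (z1 - z2)) $ i"
      by (rule matrix_vector_mult_mono[OF P]) (simp add: abs_triangle_ineq3 abs_minus_commute)
    finally show "vec_abs (z1 - z2) $ i \<le> (P *v vec_abs (z1 - z2)) $ i" by simp
  qed simp
  then show "z1 = z2" by (simp add: vec_eq_iff)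
qed

section \<open>A positive subinvariant vector of a nonnegative matrix\<close>

definition prob_simplex :: "(real^'n) set" where
  "prob_simplex = {x. (\<forall>i. 0 \<le> x $ i) \<and> (\<Sum>i\<in>UNIV. x $ i) = 1}"

lemma prob_simplex_eq_cbox_inter_hyperplane: "prob_simplex = cbox 0 1 \<inter> {x. 1 \<bullet> x = 1}"
proof -
  have "x $ i \<le> 1" if "\<forall>i. 0 \<le> x $ i" "(\<Sum>i\<in>UNIV. x $ i) = 1" for x :: "real^'n" and i
    using that member_le_sum[of i UNIV "\<lambda>i. x $ i"] by auto
  then show ?thesis
    by (auto simp: prob_simplex_def mem_box_cart inner_vec_def)
qed

lemma compact_prob_simplex: "compact prob_simplex"
  unfolding prob_simplex_eq_cbox_inter_hyperplane
  by (intro compact_Int_closed compact_cbox closed_hyperplane)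

lemma convex_prob_simplex: "convex prob_simplex"
  unfolding prob_simplex_eq_cbox_inter_hyperplane
  by (intro convex_Int convex_box convex_hyperplane)

lemma prob_simplex_nonempty: "prob_simplex \<noteq> {}"
proof -
  have "inverse (real CARD('n)) *\<^sub>R 1 \<in> (prob_simplex :: (real^'n) set)"
    by (simp add: prob_simplex_def)
  then show ?thesis by blast
qed

lemma prob_simplex_nonzero: "x \<in> prob_simplex \<Longrightarrow> x \<noteq> 0"
  by (auto simp: prob_simplex_def)

lemma perturbed_eigenvector_in_prob_simplex:
  fixes P :: "real^'n^'n" and e :: real
  assumes P: "\<And>i j. 0 \<le> P $ i $ j" and "0 < e"
  obtains x s where "x \<in> prob_simplex" "0 < s"
    "s \<le> (\<Sum>i\<in>UNIV. \<Sum>j\<in>UNIV. P $ i $ j) + e * real CARD('n)" "P *v x + e *\<^sub>R 1 = s *\<^sub>R x"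
proof -
  define y where "y x = P *v x + e *\<^sub>R 1" for x
  define f where "f x = inverse (\<Sum>i\<in>UNIV. y x $ i) *\<^sub>R y x" for x
  have y_pos: "0 < y x $ i" if "x \<in> prob_simplex" for x i
    using matrix_vector_mult_mono[OF P, of 0 x i] that \<open>0 < e\<close>
    by (simp add: y_def prob_simplex_def add_nonneg_pos)
  then have sum_y_pos: "0 < (\<Sum>i\<in>UNIV. y x $ i)" if "x \<in> prob_simplex" for x
    using that by (intro sum_pos) auto
  have "f x \<in> prob_simplex" if "x \<in> prob_simplex" for x
    using y_pos[OF that] sum_y_pos[OF that]
    by (simp add: prob_simplex_def f_def less_imp_le flip: sum_distrib_left)
  moreover have "continuous_on prob_simplex f"
    unfolding f_def y_def
    by (intro continuous_intros linear_continuous_on matrix_vector_mul_bounded_linear)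
      (use sum_y_pos[unfolded y_def] in force)
  ultimately obtain x where x: "x \<in> prob_simplex" "f x = x"
    using brouwer[OF compact_prob_simplex convex_prob_simplex prob_simplex_nonempty] by blast
  define s where "s = (\<Sum>i\<in>UNIV. y x $ i)"
  have "0 < s" unfolding s_def by (rule sum_y_pos[OF x(1)])
  moreover have "y x = s *\<^sub>R x"
  proof -
    have "s *\<^sub>R x = s *\<^sub>R f x" using x(2) by simp
    then show ?thesis using \<open>0 < s\<close> by (simp add: f_def s_def)
  qed
  moreover have "s \<le> (\<Sum>i\<in>UNIV. \<Sum>j\<in>UNIV. P $ i $ j) + e * real CARD('n)"
  proof -
    have "(\<Sum>i\<in>UNIV. (P *v x) $ i) \<le> (\<Sum>i\<in>UNIV. \<Sum>j\<in>UNIV. P $ i $ j)"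
      unfolding matrix_vector_mult_component
      by (intro sum_mono mult_right_le_one_le)
        (use P x(1) in \<open>auto simp: prob_simplex_eq_cbox_inter_hyperplane mem_box_cart\<close>)
    then show ?thesis by (simp add: s_def y_def sum.distrib)
  qed
  ultimately show ?thesis using that x(1) unfolding y_def by blast
qed

lemma limit_of_approximate_eigenpairs:
  fixes P :: "real^'n^'n"
  assumes S: "compact S" and x: "\<And>k. x k \<in> S" and s: "\<And>k. s k \<in> {a..b}"
    and approx: "\<And>k. P *v x k + e k *\<^sub>R c = s k *\<^sub>R x k" and e: "e \<longlonglongrightarrow> 0"
  obtains y t where "y \<in> S" "t \<in> {a..b}" "P *v y = t *\<^sub>R y"
proof -
  have "seq_compact (S \<times> {a..b})" using S by (intro compact_imp_seq_compact compact_Times compact_Icc)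
  moreover have "\<forall>k. (x k, s k) \<in> S \<times> {a..b}" using x s by simp
  ultimately obtain l r where l: "l \<in> S \<times> {a..b}" and r: "strict_mono r"
    and lim: "((\<lambda>k. (x k, s k)) \<circ> r) \<longlonglongrightarrow> l"
    by (rule seq_compactE)
  obtain y t where l_eq: "l = (y, t)" by fastforce
  have xy: "(\<lambda>k. x (r k)) \<longlonglongrightarrow> y" and st: "(\<lambda>k. s (r k)) \<longlonglongrightarrow> t"
    using tendsto_fst[OF lim] tendsto_snd[OF lim] by (simp_all add: l_eq o_def)
  have "(\<lambda>k. P *v x (r k) + e (r k) *\<^sub>R c) \<longlonglongrightarrow> P *v y + 0 *\<^sub>R c"
    by (intro tendsto_intros bounded_linear.tendsto[OF matrix_vector_mul_bounded_linear] xy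
        LIMSEQ_subseq_LIMSEQ[OF e r, unfolded o_def])
  moreover have "(\<lambda>k. P *v x (r k) + e (r k) *\<^sub>R c) \<longlonglongrightarrow> t *\<^sub>R y"
    unfolding approx by (intro tendsto_scaleR st xy)
  ultimately have "P *v y = t *\<^sub>R y" using LIMSEQ_unique by fastforce
  then show ?thesis using that l unfolding l_eq by blast
qed

lemma subinvariant_vector_if_spectral_radius_lt_1:
  fixes P :: "real^'n^'n"
  assumes P: "\<And>i j. 0 \<le> P $ i $ j" and rho: "spectral_radius P < 1"
  obtains u where "\<And>i. 0 < u $ i" "\<And>i. (P *v u) $ i < u $ i"
proof -
  have "\<exists>u. (\<forall>i. 0 < u $ i) \<and> (\<forall>i. (P *v u) $ i < u $ i)"
  proof (rule ccontr)
    assume no_u: "\<nexists>u. (\<forall>i. 0 < u $ i) \<and> (\<forall>i. (P *v u) $ i < u $ i)"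
    \<comment> \<open>a perturbed eigenvector with eigenvalue s < 1 would be such a u; so all perturbed
      eigenvalues are \<ge> 1, and letting the perturbation tend to 0 yields a real eigenvalue \<ge> 1\<close>
    define b where "b = (\<Sum>i\<in>UNIV. \<Sum>j\<in>UNIV. P $ i $ j) + real CARD('n)"
    define e where "e k = inverse (real (Suc k))" for k
    have "\<forall>k. \<exists>x s. x \<in> prob_simplex \<and> s \<in> {1..b} \<and> P *v x + e k *\<^sub>R 1 = s *\<^sub>R x"
    proof
      fix k
      have e: "0 < e k" "e k \<le> 1" by (simp_all add: e_def field_simps)
      obtain x s where x: "x \<in> prob_simplex" and s: "0 < s"
        "s \<le> (\<Sum>i\<in>UNIV. \<Sum>j\<in>UNIV. P $ i $ j) + e k * real CARD('n)"
        and eq: "P *v x + e k *\<^sub>R 1 = s *\<^sub>R x"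
        using perturbed_eigenvector_in_prob_simplex[OF P e(1)] by blast
      have eq_i: "(P *v x) $ i = s * x $ i - e k" for i
        using arg_cong[OF eq, of "\<lambda>v. v $ i"] by simp
      have "1 \<le> s"
      proof (rule ccontr)
        assume "\<not> 1 \<le> s"
        have "0 \<le> (P *v x) $ i" for i
          using matrix_vector_mult_mono[OF P, of 0 x i] x by (simp add: prob_simplex_def)
        then have "0 < x $ i" for i using eq_i[of i] e(1) s(1) by (smt (verit) zero_less_mult_iff)
        moreover have "(P *v x) $ i < x $ i" for i
          using eq_i[of i] \<open>0 < x $ i\<close> \<open>\<not> 1 \<le> s\<close> e(1) by (smt (verit) mult_less_cancel_right2)
        ultimately show False using no_u by blast
      qed
      moreover have "s \<le> b"
      proof -
        have "e k * real CARD('n) \<le> real CARD('n)"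
          using e by (intro mult_left_le_one_le) auto
        then show ?thesis using s(2) unfolding b_def by linarith
      qed
      ultimately show "\<exists>x s. x \<in> prob_simplex \<and> s \<in> {1..b} \<and> P *v x + e k *\<^sub>R 1 = s *\<^sub>R x"
        using x eq by auto
    qed
    then obtain x s
      where "\<forall>k. x k \<in> prob_simplex \<and> s k \<in> {1..b} \<and> P *v x k + e k *\<^sub>R 1 = s k *\<^sub>R x k"
      unfolding choice_iff by blast
    moreover have "e \<longlonglongrightarrow> 0" unfolding e_def by (rule LIMSEQ_inverse_real_of_nat)
    ultimately obtain y t where "y \<in> prob_simplex" "t \<in> {1..b}" "P *v y = t *\<^sub>R y"
      using limit_of_approximate_eigenpairs[OF compact_prob_simplex, of x s 1 b P e 1] by blast
    then have "\<bar>t\<bar> \<le> spectral_radius P"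
      by (intro abs_real_eigenvalue_le_spectral_radius prob_simplex_nonzero)
    then show False using \<open>t \<in> {1..b}\<close> rho by simp
  qed
  then show ?thesis using that by blast
qed

section \<open>The absolute value equation\<close>

lemma ex1_fixpoint_rolling:
  assumes "\<exists>!z. z = g (h z)"
  shows "\<exists>!x. x = h (g x)"
proof -
  obtain z where z: "z = g (h z)" and uniq: "\<And>z'. z' = g (h z') \<Longrightarrow> z' = z"
    using assms by blast
  show ?thesis
  proof (rule ex1I[of _ "h z"])
    show "h z = h (g (h z))" using z by (rule arg_cong)
  next
    fix x assume x: "x = h (g x)"
    then have "g x = g (h (g x))" by (rule arg_cong)
    then have "g x = z" by (rule uniq)
    then show "x = h z" using x by simp
  qed
qed

lemma abs_equation_ex1_if_fixpoint_ex1: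
  fixes A B C :: "real^'n^'n"
  assumes A: "invertible A"
    and "\<exists>!z. z = (C ** matrix_inv A) *v f - (C ** matrix_inv A ** B) *v vec_abs z"
  shows "\<exists>!x. A *v x + B *v vec_abs (C *v x) = f"
proof -
  define h where "h z = matrix_inv A *v (f - B *v vec_abs z)" for z
  have "C *v h z = (C ** matrix_inv A) *v f - (C ** matrix_inv A ** B) *v vec_abs z" for z
    by (simp add: h_def matrix_vector_mult_diff_distrib matrix_vector_mul_assoc flip: matrix_mul_assoc)
  then have "\<exists>!z. z = C *v h z" using assms(2) by simp
  then have "\<exists>!x. x = h (C *v x)" by (rule ex1_fixpoint_rolling[of "(*v) C" h])
  moreover have "A *v x + B *v vec_abs (C *v x) = f \<longleftrightarrow> x = h (C *v x)" for x
    unfolding h_def eq_diff_eq[symmetric] invertible_matrix_vector_eq_iff[OF A] ..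
  ultimately show ?thesis by simp
qed

lemma abs_equation_ex1_if_sigma_min_gt:
  fixes A B C :: "real^'n^'n"
  assumes C: "invertible C" and s: "0 \<le> s" "\<And>w. norm (B *v w) \<le> s * norm w"
    and less: "s < sigma_min (A ** matrix_inv C)"
  shows "\<exists>!x. A *v x + B *v vec_abs (C *v x) = f"
proof -
  \<comment> \<open>A = D C is invertible, C A^-1 = D^-1, and D^-1 B contracts with constant s / sigma_min D\<close>
  define D where "D = A ** matrix_inv C"
  have "0 < sigma_min D" using s(1) less by (simp add: D_def)
  then have D: "invertible D" by (rule invertible_if_sigma_min_pos)
  have "A = D ** C" by (simp add: D_def matrix_mul_assoc[symmetric] matrix_mul_matrix_inv[OF C])
  then have A: "invertible A" using D C by (simp add: invertible_mult)
  have D_inv: "matrix_inv D = C ** matrix_inv A"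
    by (rule matrix_inv_unique)
      (simp add: \<open>A = D ** C\<close> matrix_mul_assoc matrix_mul_matrix_inv[OF A, unfolded \<open>A = D ** C\<close>])
  have bound: "norm ((matrix_inv D ** B) *v w) \<le> s / sigma_min D * norm w" for w
  proof -
    have "sigma_min D * norm ((matrix_inv D ** B) *v w) \<le> norm (D *v ((matrix_inv D ** B) *v w))"
      by (rule sigma_min_le_norm)
    also have "\<dots> = norm (B *v w)"
      by (simp add: matrix_vector_mul_assoc matrix_mul_assoc matrix_mul_matrix_inv[OF D])
    also have "\<dots> \<le> s * norm w" by (rule s(2))
    finally show ?thesis using \<open>0 < sigma_min D\<close> by (simp add: field_simps)
  qed
  have "0 \<le> s / sigma_min D" "s / sigma_min D < 1"
    using s(1) less \<open>0 < sigma_min D\<close> by (simp_all add: D_def)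
  then have "\<exists>!z. z = matrix_inv D *v f - (matrix_inv D ** B) *v vec_abs z"
    using bound by (rule abs_fixpoint_unique_if_contraction)
  then show ?thesis
    by (intro abs_equation_ex1_if_fixpoint_ex1[OF A]) (simp add: D_inv)
qed

lemma abs_equation_ex1:
  fixes A B C :: "real^'n^'n"
  assumes "(invertible C \<and> sigma_max (mat_abs B) < sigma_min (A ** matrix_inv C))
         \<or> (invertible C \<and> sigma_max B < sigma_min (A ** matrix_inv C))
         \<or> (invertible A \<and> spectral_radius (mat_abs (C ** matrix_inv A) ** mat_abs B) < 1)
         \<or> (invertible A \<and> sigma_max (C ** matrix_inv A ** B) < 1)"
  shows "\<exists>!x. A *v x + B *v vec_abs (C *v x) = f"
  using assms
proof (elim disjE conjE)
  assume C: "invertible C" and less: "sigma_max (mat_abs B) < sigma_min (A ** matrix_inv C)"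
  have "norm (B *v w) \<le> sigma_max (mat_abs B) * norm w" for w
    using order_trans[OF norm_matrix_vector_le_mat_abs norm_le_sigma_max[of "mat_abs B" "vec_abs w"]]
    by simp
  then show ?thesis by (rule abs_equation_ex1_if_sigma_min_gt[OF C sigma_max_nonneg _ less])
next
  assume C: "invertible C" and less: "sigma_max B < sigma_min (A ** matrix_inv C)"
  show ?thesis by (rule abs_equation_ex1_if_sigma_min_gt[OF C sigma_max_nonneg norm_le_sigma_max less])
next
  assume A: "invertible A" and rho: "spectral_radius (mat_abs (C ** matrix_inv A) ** mat_abs B) < 1"
  obtain u where u: "\<And>i. 0 < u $ i" "\<And>i. ((mat_abs (C ** matrix_inv A) ** mat_abs B) *v u) $ i < u $ i"
    using subinvariant_vector_if_spectral_radius_lt_1[OF mat_abs_mult_mat_abs_nonneg rho] by blast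
  have "\<exists>!z. z = (C ** matrix_inv A) *v f - (C ** matrix_inv A ** B) *v vec_abs z"
    by (rule abs_fixpoint_unique_if_dominated[OF mat_abs_mult_mat_abs_nonneg abs_matrix_mult_vector_le u])
  then show ?thesis by (rule abs_equation_ex1_if_fixpoint_ex1[OF A])
next
  assume A: "invertible A" and less: "sigma_max (C ** matrix_inv A ** B) < 1"
  have "\<exists>!z. z = (C ** matrix_inv A) *v f - (C ** matrix_inv A ** B) *v vec_abs z"
    by (rule abs_fixpoint_unique_if_contraction[OF sigma_max_nonneg less norm_le_sigma_max])
  then show ?thesis by (rule abs_equation_ex1_if_fixpoint_ex1[OF A])
qed

lemma column_abs_matrix_equation:
  "column j (A ** X + B ** mat_abs (C ** X)) = A *v column j X + B *v vec_abs (C *v column j X)"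
  by (simp add: vec_eq_iff column_def matrix_matrix_mult_def matrix_vector_mult_def mat_abs_def)

lemma matrix_eq_iff_columns: "M = N \<longleftrightarrow> (\<forall>j. column j M = column j N)"
  by (auto simp: vec_eq_iff column_def)

lemma abs_matrix_equation_ex1_if_columnwise:
  fixes A B C F :: "real^'n^'n"
  assumes "\<And>f. \<exists>!x. A *v x + B *v vec_abs (C *v x) = f"
  shows "\<exists>!X. A ** X + B ** mat_abs (C ** X) = F"
proof -
  have eq_iff: "A ** X + B ** mat_abs (C ** X) = F \<longleftrightarrow>
      (\<forall>j. A *v column j X + B *v vec_abs (C *v column j X) = column j F)" for X
    by (simp add: matrix_eq_iff_columns column_abs_matrix_equation)
  have "\<forall>j. \<exists>x. A *v x + B *v vec_abs (C *v x) = column j F" using assms by blast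
  then obtain x where x: "\<forall>j. A *v x j + B *v vec_abs (C *v x j) = column j F"
    unfolding choice_iff by blast
  define X where "X = (\<chi> i j. x j $ i)"
  have X: "column j X = x j" for j by (simp add: X_def column_def vec_eq_iff)
  show ?thesis
  proof (rule ex1I[of _ X])
    show "A ** X + B ** mat_abs (C ** X) = F" unfolding eq_iff X using x by blast
  next
    fix Y assume "A ** Y + B ** mat_abs (C ** Y) = F"
    then have "column j Y = column j X" for j
      unfolding eq_iff X using x assms[of "column j F"] by blast
    then show "Y = X" by (simp add: matrix_eq_iff_columns)
  qed
qed

theorem theorem4p2:
  fixes A B C F :: "real^'n^'n"
  assumes "(invertible C \<and> sigma_max (mat_abs B) < sigma_min (A ** matrix_inv C))
         \<or> (invertible C \<and> sigma_max B < sigma_min (A ** matrix_inv C))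
         \<or> (invertible A \<and> spectral_radius (mat_abs (C ** matrix_inv A) ** mat_abs B) < 1)
         \<or> (invertible A \<and> sigma_max (C ** matrix_inv A ** B) < 1)"
  shows "\<exists>!X :: real^'n^'n. A ** X + B ** mat_abs (C ** X) = F"
  by (rule abs_matrix_equation_ex1_if_columnwise) (rule abs_equation_ex1[OF assms])

end
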